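(* Let $x$ be an infinite word over a finite alphabet and let $k,\lambda\in\mathbb{N}=\{1,2,3,\dots\}$ be such that $$\underline{d}(\mathrm{AP}(x,k,\lambda)) < \left(1+\left\lfloor\frac{k^2-k}{\lambda^2+\lambda}\right\rfloor\right)^{-1}.$$ Then there is a word $u$ with $|u|\le (k-1)\left\lfloor\frac{k^2-k}{\lambda^2+\lambda}\right\rfloor$ such that $u^\ell$ is a factor of $x$ for every $\ell>0$. In particular, $x$ is not $\omega$-power-free.
   Context: A factor is a contiguous subword; $|u|$ is the length of $u$ and $u^\ell$ is $\ell$ concatenated copies of $u$. A $(k,\lambda)$-anti-power is a word $w=w_1\cdots w_k$ with $|w_1|=\cdots=|w_k|$ such that $|\{i: w_i=w_j\}|\le\lambda$ for each $j\in\{1,\dots,k\}$. $\mathrm{AP}(x,k,\lambda)$ is the set of $m\in\mathbb{N}$ such that the prefix of $x$ of length $km$ is a $(k,\lambda)$-anti-power. The lower density of $S\subseteq\mathbb{N}$ is $\underline{d}(S)=\liminf_{n\to\infty}|S\cap\{1,\dots,n\}|/n$. A word is $\omega$-power-free if for every finite (nonempty) factor $u$ there exists $\ell\in\mathbb{N}$ such that $u^\ell$ is not a factor. *)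

theory Defs
  imports "HOL-Analysis.Analysis"
begin

text \<open>Infinite words are functions nat \<Rightarrow> 'a (positions 0,1,2,...); finite words are lists.\<close>

definition factor_of :: "'a list \<Rightarrow> (nat \<Rightarrow> 'a) \<Rightarrow> bool" where
  "factor_of u x \<longleftrightarrow> (\<exists>i. u = map x [i..<i + length u])"

definition word_pow :: "'a list \<Rightarrow> nat \<Rightarrow> 'a list" where
  "word_pow u l = concat (replicate l u)"

definition block :: "(nat \<Rightarrow> 'a) \<Rightarrow> nat \<Rightarrow> nat \<Rightarrow> 'a list" where
  "block x m i = map x [(i - 1) * m..<i * m]"

definition prefix_anti_power :: "(nat \<Rightarrow> 'a) \<Rightarrow> nat \<Rightarrow> nat \<Rightarrow> nat \<Rightarrow> bool" where
  "prefix_anti_power x k lam m \<longleftrightarrow>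
     (\<forall>j\<in>{1..k}. card {i\<in>{1..k}. block x m i = block x m j} \<le> lam)"

definition AP :: "(nat \<Rightarrow> 'a) \<Rightarrow> nat \<Rightarrow> nat \<Rightarrow> nat set" where
  "AP x k lam = {m. m \<ge> 1 \<and> prefix_anti_power x k lam m}"

definition lower_density :: "nat set \<Rightarrow> ereal" where
  "lower_density S = liminf (\<lambda>n. ereal (real (card (S \<inter> {1..n})) / real n))"

definition omega_power_free :: "(nat \<Rightarrow> 'a) \<Rightarrow> bool" where
  "omega_power_free x \<longleftrightarrow>
     (\<forall>u. u \<noteq> [] \<and> factor_of u x \<longrightarrow> (\<exists>l\<ge>1. \<not> factor_of (word_pow u l) x))"

end

(* Write N = (k^2 - k) div (lam^2 + lam). If the lower density of AP(x,k,lam) is below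
   1/(N+1), then arbitrarily far out there are N+1 consecutive block lengths m, ..., m+N none of
   which gives an anti-power prefix. At each of them some block occurs more than lam times,
   which yields at least (lam+1 choose 2) pairs {a,b} of equal blocks; since
   (N+1) (lam+1 choose 2) exceeds (k choose 2), two of the lengths, m' and m' + d, share a pair
   a < b. The two equalities "block a = block b" shift x by (b-a) m' and by (b-a) (m'+d) on a
   common stretch of length about m', so x has period (b-a) d <= (k-1) N there and contains a
   high power of a word of that length. Only finitely many words of length <= (k-1) N exist,
   so one of them occurs with every exponent. *)

theory Submission imports Defs begin

lemma word_pow_Suc: "word_pow u (Suc l) = u @ word_pow u l"
  by (simp add: word_pow_def)

lemma word_pow_add: "word_pow u (a + b) = word_pow u a @ word_pow u b"
  by (simp add: word_pow_def replicate_add)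

lemma length_word_pow: "length (word_pow u l) = l * length u"
  by (induction l) (simp_all add: word_pow_def)

lemma factor_of_appendD:
  assumes "factor_of (v @ w) x"
  shows "factor_of v x"
proof -
  obtain i where i: "v @ w = map x [i..<i + length (v @ w)]"
    using assms unfolding factor_of_def by blast
  have "v = take (length v) (v @ w)"
    by simp
  also have "\<dots> = map x [i..<i + length v]"
    by (subst i) (simp add: take_map)
  finally show ?thesis
    unfolding factor_of_def by blast
qed

lemma factor_of_word_pow_mono:
  assumes "factor_of (word_pow u a) x" and "b \<le> a"
  shows "factor_of (word_pow u b) x"
proof -
  have "word_pow u a = word_pow u b @ word_pow u (a - b)"
    using assms(2) word_pow_add[of u b "a - b"] by simp
  then show ?thesis
    using assms(1) factor_of_appendD by metis
qed

lemma factor_of_imp_subset_range: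
  assumes "factor_of u x"
  shows "set u \<subseteq> range x"
proof -
  obtain i where "u = map x [i..<i + length u]"
    using assms unfolding factor_of_def by blast
  then show ?thesis
    by (metis image_mono set_map top_greatest)
qed

lemma word_pow_eq_map_if_periodic:
  assumes per: "\<And>q. s \<le> q \<Longrightarrow> q < s + len \<Longrightarrow> x q = x (q + p)"
  shows "l * p \<le> len + p \<Longrightarrow> word_pow (map x [s..<s + p]) l = map x [s..<s + l * p]"
proof (induction l)
  case 0
  then show ?case by (simp add: word_pow_def)
next
  case (Suc l)
  have shift: "map x [s + p..<s + p + l * p] = map x [s..<s + l * p]"
  proof (rule nth_equalityI)
    fix r
    assume "r < length (map x [s + p..<s + p + l * p])"
    then have "s \<le> s + r" "s + r < s + len"
      using Suc.prems by simp_all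
    then show "map x [s + p..<s + p + l * p] ! r = map x [s..<s + l * p] ! r"
      using per[of "s + r"] \<open>r < _\<close> by (simp add: add.commute add.left_commute)
  qed simp
  have "[s..<s + Suc l * p] = [s..<s + p] @ [s + p..<s + p + l * p]"
    using upt_add_eq_append[of s "s + p" "l * p"] by (simp add: add.assoc)
  then show ?case
    using Suc shift by (simp add: word_pow_Suc)
qed

lemma factor_of_word_pow_if_periodic:
  assumes "\<And>q. s \<le> q \<Longrightarrow> q < s + len \<Longrightarrow> x q = x (q + p)" and "l * p \<le> len + p"
  shows "factor_of (word_pow (map x [s..<s + p]) l) x"
  unfolding factor_of_def
  by (intro exI[of _ s]) (simp add: word_pow_eq_map_if_periodic[of s len x p, OF assms] length_word_pow)

lemma nth_block: "r < m \<Longrightarrow> block x m (Suc i) ! r = x (i * m + r)"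
  by (simp add: block_def)

lemma shift_if_block_eq:
  assumes "block x m (Suc i) = block x m (Suc i + e)" and "i * m \<le> a" "a < Suc i * m"
  shows "x a = x (a + e * m)"
proof -
  define r where "r = a - i * m"
  have r: "a = i * m + r" "r < m"
    using assms(2,3) by (simp_all add: r_def)
  have "x a = block x m (Suc i) ! r"
    using r by (simp add: nth_block)
  also have "\<dots> = block x m (Suc i + e) ! r"
    using assms(1) by simp
  also have "\<dots> = x (a + e * m)"
    using nth_block[OF r(2), of x "i + e"] r(1) by (simp add: algebra_simps)
  finally show ?thesis .
qed

text \<open>The two shifts, by \<open>e * m\<close> and by \<open>e * (m + t)\<close>, overlap on the stated stretch
  and differ by \<open>e * t\<close>.\<close>

lemma periodic_if_block_eqs:
  assumes eq0: "block x m (Suc i) = block x m (Suc i + e)"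
    and eq1: "block x (m + t) (Suc i) = block x (m + t) (Suc i + e)"
    and "i * (m + t) + e * m \<le> q" "q < Suc i * m + e * m"
  shows "x q = x (q + e * t)"
proof -
  define a where "a = q - e * m"
  have a: "q = a + e * m" "i * (m + t) \<le> a" "a < Suc i * m"
    using assms(3,4) by (simp_all add: a_def)
  have "i * m \<le> a" "a < Suc i * (m + t)"
    using a(2,3) by (simp_all add: add_mult_distrib2)
  then have "x a = x (a + e * m)" "x a = x (a + e * (m + t))"
    using shift_if_block_eq[OF eq0, of a] shift_if_block_eq[OF eq1, of a] a(2,3) by simp_all
  moreover have "a + e * (m + t) = q + e * t"
    using a(1) by (simp add: add_mult_distrib2)
  ultimately show ?thesis
    using a(1) by simp
qed

lemma power_factor_if_block_eqs:
  assumes "block x m (Suc i) = block x m (Suc i + e)"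
    and "block x (m + t) (Suc i) = block x (m + t) (Suc i + e)"
    and "l * (e * t) + i * t \<le> m"
  shows "factor_of (word_pow (map x [i * (m + t) + e * m..<i * (m + t) + e * m + e * t]) l) x"
proof -
  obtain r where m: "m = l * (e * t) + i * t + r"
    using assms(3) le_Suc_ex by blast
  have "x q = x (q + e * t)"
    if "i * (m + t) + e * m \<le> q" "q < i * (m + t) + e * m + (l * (e * t) + r)" for q
  proof (rule periodic_if_block_eqs[OF assms(1,2) that(1)])
    have "i * (m + t) + e * m + (l * (e * t) + r) = Suc i * m + e * m"
      using m by (simp add: algebra_simps)
    then show "q < Suc i * m + e * m"
      using that(2) by simp
  qed
  moreover have "l * (e * t) \<le> l * (e * t) + r + e * t"
    by simp
  ultimately show ?thesis
    by (rule factor_of_word_pow_if_periodic)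
qed

definition equal_block_pairs :: "(nat \<Rightarrow> 'a) \<Rightarrow> nat \<Rightarrow> nat \<Rightarrow> nat set set" where
  "equal_block_pairs x k m =
     {B. B \<subseteq> {1..k} \<and> card B = 2 \<and> (\<forall>a\<in>B. \<forall>b\<in>B. block x m a = block x m b)}"

lemma equal_block_pairs_subset: "equal_block_pairs x k m \<subseteq> {B. B \<subseteq> {1..k} \<and> card B = 2}"
  by (auto simp: equal_block_pairs_def)

lemma card_equal_block_pairs_if_not_anti_power:
  assumes "\<not> prefix_anti_power x k lam m"
  shows "Suc lam choose 2 \<le> card (equal_block_pairs x k m)"
proof -
  obtain j where "j \<in> {1..k}" and big: "lam < card {i\<in>{1..k}. block x m i = block x m j}"
    using assms unfolding prefix_anti_power_def by (auto simp: not_le)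
  define C where "C = {i\<in>{1..k}. block x m i = block x m j}"
  have "Suc lam choose 2 \<le> card C choose 2"
    using big by (intro binomial_right_mono) (simp add: C_def)
  also have "\<dots> = card {B. B \<subseteq> C \<and> card B = 2}"
    by (simp add: C_def n_subsets)
  also have "\<dots> \<le> card (equal_block_pairs x k m)"
  proof (rule card_mono)
    show "finite (equal_block_pairs x k m)"
      using equal_block_pairs_subset by (rule finite_subset) simp
    show "{B. B \<subseteq> C \<and> card B = 2} \<subseteq> equal_block_pairs x k m"
      by (auto simp: C_def equal_block_pairs_def subset_iff)
  qed
  finally show ?thesis .
qed

lemma pigeonhole_overlap:
  assumes "\<And>s. s \<le> N \<Longrightarrow> c \<le> card (P s)" and "\<And>s. s \<le> N \<Longrightarrow> P s \<subseteq> U"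
    and "finite U" and "card U < (N + 1) * c"
  shows "\<exists>s t. s < t \<and> t \<le> N \<and> P s \<inter> P t \<noteq> {}"
proof (rule ccontr)
  assume "\<not> ?thesis"
  then have disj: "\<forall>s\<in>{..N}. \<forall>t\<in>{..N}. s \<noteq> t \<longrightarrow> P s \<inter> P t = {}"
    by (metis Int_commute atMost_iff nat_neq_iff)
  have fin: "\<forall>s\<in>{..N}. finite (P s)"
    using assms(2,3) finite_subset by blast
  have "(N + 1) * c = (\<Sum>s\<le>N. c)"
    by simp
  also have "\<dots> \<le> (\<Sum>s\<le>N. card (P s))"
    using assms(1) by (intro sum_mono) auto
  also have "\<dots> = card (\<Union>s\<le>N. P s)"
    using card_UN_disjoint[OF _ fin disj] by simp
  also have "\<dots> \<le> card U"
    using assms(2,3) by (intro card_mono) auto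
  finally show False
    using assms(4) by simp
qed

lemma common_equal_block_pair:
  assumes "\<And>t. t \<le> N \<Longrightarrow> \<not> prefix_anti_power x k lam (m + t)"
    and "k choose 2 < (N + 1) * (Suc lam choose 2)"
  shows "\<exists>s t a b. s < t \<and> t \<le> N \<and> 1 \<le> a \<and> a < b \<and> b \<le> k \<and>
           block x (m + s) a = block x (m + s) b \<and> block x (m + t) a = block x (m + t) b"
proof -
  have "\<exists>s t. s < t \<and> t \<le> N \<and>
      equal_block_pairs x k (m + s) \<inter> equal_block_pairs x k (m + t) \<noteq> {}"
  proof (rule pigeonhole_overlap[where U = "{B. B \<subseteq> {1..k} \<and> card B = 2}"])
    show "Suc lam choose 2 \<le> card (equal_block_pairs x k (m + s))" if "s \<le> N" for s
      using card_equal_block_pairs_if_not_anti_power[OF assms(1)[OF that]] .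
    show "equal_block_pairs x k (m + s) \<subseteq> {B. B \<subseteq> {1..k} \<and> card B = 2}" for s
      by (rule equal_block_pairs_subset)
    show "card {B. B \<subseteq> {1..k} \<and> card B = 2} < (N + 1) * (Suc lam choose 2)"
      using assms(2) by (simp add: n_subsets)
  qed simp
  then obtain s t B where st: "s < t" "t \<le> N"
    and B: "B \<in> equal_block_pairs x k (m + s)" "B \<in> equal_block_pairs x k (m + t)"
    by blast
  have "card B = 2"
    using B(1) by (simp add: equal_block_pairs_def)
  then obtain a b where "B = {a, b}" "a \<noteq> b"
    unfolding card_2_iff by blast
  then obtain a b where ab: "B = {a, b}" "a < b"
    by (metis insert_commute nat_neq_iff)
  have "1 \<le> a" "b \<le> k"
    using B(1) ab(1) unfolding equal_block_pairs_def by auto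
  moreover have "block x (m + s) a = block x (m + s) b" "block x (m + t) a = block x (m + t) b"
    using B ab(1) unfolding equal_block_pairs_def by blast+
  ultimately show ?thesis
    using st ab(2) by blast
qed

lemma choose_two_less_div_bound:
  fixes k lam :: nat
  assumes "1 \<le> lam"
  shows "k choose 2 < ((k^2 - k) div (lam^2 + lam) + 1) * (Suc lam choose 2)"
proof -
  have double_choose_2: "2 * (n choose 2) = n * (n - 1)" for n :: nat
  proof -
    have "even (n * (n - 1))"
      by (cases "even n") auto
    then show ?thesis
      by (simp add: choose_two)
  qed
  define D where "D = Suc lam choose 2"
  have D: "lam^2 + lam = 2 * D" "0 < D"
    using double_choose_2[of "Suc lam"] assms by (simp_all add: D_def power2_eq_square)
  have K: "k^2 - k = 2 * (k choose 2)"
    using double_choose_2[of k] by (simp add: power2_eq_square algebra_simps)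
  have "2 * (k choose 2) < 2 * D + (2 * (k choose 2)) div (2 * D) * (2 * D)"
    using D(2) by (intro dividend_less_div_times) simp
  then show ?thesis
    unfolding K D(1) D_def[symmetric] by (simp add: algebra_simps)
qed

definition bounded_gaps_from :: "nat \<Rightarrow> nat \<Rightarrow> nat set \<Rightarrow> bool" where
  "bounded_gaps_from M N S \<longleftrightarrow> (\<forall>m\<ge>M. \<exists>t\<le>N. m + t \<in> S)"

lemma card_ge_if_bounded_gaps:
  assumes "bounded_gaps_from M N S" and "0 < M"
  shows "q \<le> card (S \<inter> {1..<M + q * (N + 1)})"
proof (induction q)
  case 0
  then show ?case by simp
next
  case (Suc q)
  obtain t where "t \<le> N" and y: "M + q * (N + 1) + t \<in> S"
    using assms(1) unfolding bounded_gaps_from_def by (meson le_add1)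
  define y where "y = M + q * (N + 1) + t"
  have "insert y (S \<inter> {1..<M + q * (N + 1)}) \<subseteq> S \<inter> {1..<M + Suc q * (N + 1)}"
    using \<open>t \<le> N\<close> y assms(2) by (auto simp: y_def)
  then have "card (insert y (S \<inter> {1..<M + q * (N + 1)})) \<le> card (S \<inter> {1..<M + Suc q * (N + 1)})"
    by (intro card_mono) auto
  moreover have "y \<notin> S \<inter> {1..<M + q * (N + 1)}"
    by (simp add: y_def)
  ultimately show ?case
    using Suc.IH by simp
qed

lemma real_card_ge_if_bounded_gaps:
  assumes "bounded_gaps_from M N S" and "0 < M" and "M \<le> n"
  shows "real n - real (M + N) \<le> real (card (S \<inter> {1..n})) * (1 + real N)"
proof -
  define q where "q = (n + 1 - M) div (N + 1)"
  have "q * (N + 1) \<le> n + 1 - M"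
    unfolding q_def by (rule div_times_less_eq_dividend)
  then have "{1..<M + q * (N + 1)} \<subseteq> {1..n}"
    using assms(3) by auto
  then have "card (S \<inter> {1..<M + q * (N + 1)}) \<le> card (S \<inter> {1..n})"
    by (intro card_mono) auto
  then have "q \<le> card (S \<inter> {1..n})"
    using card_ge_if_bounded_gaps[OF assms(1,2), of q] by simp
  moreover have "n + 1 - M < N + 1 + q * (N + 1)"
    unfolding q_def by (rule dividend_less_div_times) simp
  moreover have "n + 1 - M + M = n + 1"
    using assms(3) by simp
  ultimately have "n \<le> card (S \<inter> {1..n}) * (N + 1) + N + M"
    using mult_le_mono1[of q "card (S \<inter> {1..n})" "N + 1"] by linarith
  then have "real n \<le> real (card (S \<inter> {1..n}) * (N + 1) + N + M)"
    by (simp only: of_nat_le_iff)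
  then show ?thesis
    by (simp add: algebra_simps)
qed

lemma lower_density_ge_if_bounded_gaps:
  assumes "bounded_gaps_from M N S"
  shows "ereal (1 / (1 + real N)) \<le> lower_density S"
proof -
  define M' where "M' = Suc M"
  have gaps: "bounded_gaps_from M' N S"
    using assms unfolding bounded_gaps_from_def M'_def by simp
  define g where "g n = (1 - real (M' + N) / real n) / (1 + real N)" for n
  have "g \<longlonglongrightarrow> (1 - 0) / (1 + real N)"
    unfolding g_def by (intro tendsto_intros) auto
  then have lim: "(\<lambda>n. ereal (g n)) \<longlonglongrightarrow> ereal (1 / (1 + real N))"
    by (simp add: tendsto_ereal)
  have "eventually (\<lambda>n. ereal (g n) \<le> ereal (real (card (S \<inter> {1..n})) / real n)) sequentially"
    using eventually_ge_at_top[of M']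
  proof eventually_elim
    case (elim n)
    then have "0 < real n"
      by (simp add: M'_def)
    then have "g n = (real n - real (M' + N)) / real n / (1 + real N)"
      by (simp add: g_def diff_divide_distrib)
    also have "\<dots> \<le> real (card (S \<inter> {1..n})) * (1 + real N) / real n / (1 + real N)"
      using real_card_ge_if_bounded_gaps[OF gaps _ elim] \<open>0 < real n\<close>
      by (intro divide_right_mono) (simp_all add: M'_def)
    also have "\<dots> = real (card (S \<inter> {1..n})) / real n"
      by simp
    finally show ?case
      by simp
  qed
  then have "liminf (\<lambda>n. ereal (g n)) \<le> lower_density S"
    unfolding lower_density_def by (rule Liminf_mono)
  moreover have "liminf (\<lambda>n. ereal (g n)) = ereal (1 / (1 + real N))"
    using lim by (intro lim_imp_Liminf) simp_all
  ultimately show ?thesis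
    by simp
qed

lemma gap_if_lower_density_less:
  assumes "lower_density S < ereal (1 / (1 + real N))"
  shows "\<exists>m\<ge>M. \<forall>t\<le>N. m + t \<notin> S"
  using lower_density_ge_if_bounded_gaps[of M N S] assms
  unfolding bounded_gaps_from_def by (meson not_le)

lemma short_power_factor_if_lower_density_less:
  assumes bound: "k choose 2 < (N + 1) * (Suc lam choose 2)"
    and density: "lower_density (AP x k lam) < ereal (1 / (1 + real N))"
  shows "\<exists>u. u \<noteq> [] \<and> length u \<le> (k - 1) * N \<and> factor_of (word_pow u l) x"
proof -
  define L where "L = (k - 1) * N"
  obtain m where m: "Suc (l * L + L) \<le> m" and gap: "\<forall>t\<le>N. m + t \<notin> AP x k lam"
    using gap_if_lower_density_less[OF density] by blast
  have "\<not> prefix_anti_power x k lam (m + t)" if "t \<le> N" for t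
    using gap that m by (auto simp: AP_def)
  then obtain s t a b where st: "s < t" "t \<le> N" and ab: "1 \<le> a" "a < b" "b \<le> k"
    and eqs: "block x (m + s) a = block x (m + s) b" "block x (m + t) a = block x (m + t) b"
    using common_equal_block_pair[OF _ bound] by blast
  obtain i where i: "a = Suc i"
    using ab(1) by (cases a) auto
  define e where "e = b - a"
  define d where "d = t - s"
  have e: "0 < e" "b = Suc i + e" "e \<le> k - 1"
    using ab i by (simp_all add: e_def)
  have d: "0 < d" "d \<le> N" "m + t = m + s + d"
    using st by (simp_all add: d_def)
  have eL: "e * d \<le> L" and iL: "i * d \<le> L"
    using ab(2,3) i e(3) d(2) unfolding L_def by (intro mult_le_mono; simp)+
  have "l * (e * d) \<le> l * L"
    using eL by (rule mult_le_mono2)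
  then have "l * (e * d) + i * d \<le> m + s"
    using iL m by linarith
  then have "factor_of (word_pow (map x [i * (m + s + d) + e * (m + s)..<
      i * (m + s + d) + e * (m + s) + e * d]) l) x"
    using eqs[unfolded i e(2) d(3)] by (intro power_factor_if_block_eqs)
  moreover have "0 < e * d"
    using d e by simp
  ultimately show ?thesis
    using eL unfolding L_def by (intro exI[of _ "map x [i * (m + s + d) + e * (m + s)..<
      i * (m + s + d) + e * (m + s) + e * d]"]) simp
qed

lemma all_powers_if_bounded_powers:
  assumes "finite (range x)"
    and "\<And>l. \<exists>u. u \<noteq> [] \<and> length u \<le> L \<and> factor_of (word_pow u l) x"
  shows "\<exists>u. u \<noteq> [] \<and> length u \<le> L \<and> (\<forall>l. factor_of (word_pow u l) x)"
proof -
  have "\<forall>l. \<exists>u. u \<noteq> [] \<and> length u \<le> L \<and> factor_of (word_pow u (Suc l)) x"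
    using assms(2) by blast
  then obtain w where w: "\<And>l. w l \<noteq> [] \<and> length (w l) \<le> L \<and> factor_of (word_pow (w l) (Suc l)) x"
    by metis
  have "range w \<subseteq> {u. set u \<subseteq> range x \<and> length u \<le> L}"
    using w factor_of_appendD factor_of_imp_subset_range by (fastforce simp: word_pow_Suc)
  then have "finite (range w)"
    using finite_lists_length_le[OF assms(1)] finite_subset by blast
  then obtain l0 where "infinite {l. w l = w l0}"
    using pigeonhole_infinite[of UNIV w] by auto
  then have "\<exists>l'\<ge>l. w l' = w l0" for l
    unfolding infinite_nat_iff_unbounded_le by blast
  then have "factor_of (word_pow (w l0) l) x" for l
    using w factor_of_word_pow_mono le_SucI by metis
  then show ?thesis
    using w by blast
qed

lemma not_omega_power_free_if_all_powers:
  assumes "u \<noteq> []" and "\<And>l. factor_of (word_pow u l) x"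
  shows "\<not> omega_power_free x"
proof -
  have "factor_of u x"
    using assms(2)[of 1] by (simp add: word_pow_def)
  then show ?thesis
    using assms unfolding omega_power_free_def by blast
qed

theorem corollary3p6:
  fixes x :: "nat \<Rightarrow> 'a" and k lam :: nat
  assumes "finite (range x)"
    and "k \<ge> 1" and "lam \<ge> 1"
    and "lower_density (AP x k lam)
           < ereal (1 / (1 + real ((k^2 - k) div (lam^2 + lam))))"
  shows "(\<exists>u. u \<noteq> [] \<and> length u \<le> (k - 1) * ((k^2 - k) div (lam^2 + lam))
              \<and> (\<forall>l>0. factor_of (word_pow u l) x))
         \<and> \<not> omega_power_free x"
proof -
  let ?N = "(k^2 - k) div (lam^2 + lam)"
  have "\<exists>u. u \<noteq> [] \<and> length u \<le> (k - 1) * ?N \<and> factor_of (word_pow u l) x" for l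
    using short_power_factor_if_lower_density_less[OF choose_two_less_div_bound[OF assms(3)] assms(4)] .
  then obtain u where u: "u \<noteq> []" "length u \<le> (k - 1) * ?N" "\<And>l. factor_of (word_pow u l) x"
    using all_powers_if_bounded_powers[OF assms(1)] by blast
  then show ?thesis
    using not_omega_power_free_if_all_powers by blast
qed

end
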